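(* In the ring of symmetric functions (power series in $p_1,p_2,\dots$ over $\mathbb{Q}$), $$p_1\,\partial_{p_1}\Sigma\operatorname{PreLie}+\partial_{p_1}\bigl(\operatorname{Comm}\circ\Sigma\operatorname{PreLie}\bigr)=1.$$
   Context: Symmetric functions are written as (formal power series) in the power sums $p_1,p_2,\dots$ over $\mathbb{Q}$, and $\partial_{p_1}$ is the partial derivative with respect to $p_1$. $\circ$ denotes plethysm: $p_k\circ f$ is obtained from $f$ by replacing every $p_j$ by $p_{jk}$ (rational constants are fixed), and $g\circ f$ is obtained by substituting $p_k\circ f$ for $p_k$ in $g$. The suspension of $f=f(p_1,p_2,\dots)$ is $\Sigma f=-f(-p_1,-p_2,-p_3,\dots)$. $\operatorname{Comm}=\exp\bigl(\sum_{k\ge1}p_k/k\bigr)-1$. $\operatorname{PreLie}$ is the Frobenius characteristic $\sum_{n\ge1}\operatorname{ch}(\mathbb{Q}\mathcal{R}_n)$ of the permutation representations of the symmetric groups $\mathfrak{S}_n$ on the sets $\mathcal{R}_n$ of rooted trees with vertex set $\{1,\dots,n\}$; equivalently, it is the unique symmetric function without constant term satisfying $\operatorname{PreLie}=p_1\,(1+\operatorname{Comm}\circ\operatorname{PreLie})$. *)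

theory Defs
  imports Complex_Main "HOL-Library.Poly_Mapping"
begin

(* Symmetric functions over Q as formal power series in the power sums p_1, p_2, ...
   A monomial is a finitely supported exponent vector m :: nat =>0 nat, where
   Poly_Mapping.lookup m i is the exponent of p_(i+1)  (so key 0 is p_1, key 1 is p_2, ...). *)

type_synonym mono = "nat \<Rightarrow>\<^sub>0 nat"
type_synonym sf = "mono \<Rightarrow> rat"

definition sf_const :: "rat \<Rightarrow> sf" where
  "sf_const c = (\<lambda>m. if m = 0 then c else 0)"

definition sf_one :: sf where
  "sf_one = sf_const 1"

definition sf_add :: "sf \<Rightarrow> sf \<Rightarrow> sf" where
  "sf_add f g = (\<lambda>m. f m + g m)"

definition sf_diff :: "sf \<Rightarrow> sf \<Rightarrow> sf" where
  "sf_diff f g = (\<lambda>m. f m - g m)"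

definition sf_smul :: "rat \<Rightarrow> sf \<Rightarrow> sf" where
  "sf_smul c f = (\<lambda>m. c * f m)"

definition sf_mult :: "sf \<Rightarrow> sf \<Rightarrow> sf" where
  "sf_mult f g = (\<lambda>m. \<Sum>(a, b) \<in> {(a, b). a + b = m}. f a * g b)"

primrec sf_pow :: "nat \<Rightarrow> sf \<Rightarrow> sf" where
  "sf_pow 0 f = sf_one"
| "sf_pow (Suc n) f = sf_mult f (sf_pow n f)"

(* the power sum p_k, for k >= 1 *)
definition sf_p :: "nat \<Rightarrow> sf" where
  "sf_p k = (\<lambda>m. if m = Poly_Mapping.single (k - 1) 1 then 1 else 0)"

(* sum of a formally summable family (coefficientwise only finitely many nonzero terms) *)
definition sf_sum_family :: "('i \<Rightarrow> sf) \<Rightarrow> sf" where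
  "sf_sum_family F = (\<lambda>m. \<Sum>i \<in> {i. F i m \<noteq> 0}. F i m)"

definition sf_dp1 :: "sf \<Rightarrow> sf" where
  "sf_dp1 f = (\<lambda>m. of_nat (Poly_Mapping.lookup m 0 + 1) * f (m + Poly_Mapping.single 0 1))"

definition mono_count :: "mono \<Rightarrow> nat" where
  "mono_count m = sum (Poly_Mapping.lookup m) (Poly_Mapping.keys m)"

(* suspension: Sigma f = - f(-p_1, -p_2, ...) *)
definition sf_susp :: "sf \<Rightarrow> sf" where
  "sf_susp f = (\<lambda>m. - ((-1) ^ mono_count m * f m))"

(* p_k o f (k >= 1): replace every p_j by p_(j k) *)
definition sf_pk_pleth :: "nat \<Rightarrow> sf \<Rightarrow> sf" where
  "sf_pk_pleth k f = (\<lambda>m. sum f {a. \<forall>i. Poly_Mapping.lookup m i =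
      (if k dvd Suc i then Poly_Mapping.lookup a (Suc i div k - 1) else 0)})"

(* substitute h i for p_(i+1) in the monomial mu *)
definition sf_subst_mono :: "(nat \<Rightarrow> sf) \<Rightarrow> mono \<Rightarrow> sf" where
  "sf_subst_mono h \<mu> = foldr (\<lambda>i acc. sf_mult (sf_pow (Poly_Mapping.lookup \<mu> i) (h i)) acc)
      (sorted_list_of_set (Poly_Mapping.keys \<mu>)) sf_one"

(* plethysm g o f: substitute p_k o f for p_k in g *)
definition sf_pleth :: "sf \<Rightarrow> sf \<Rightarrow> sf" where
  "sf_pleth g f = sf_sum_family (\<lambda>\<mu>. sf_smul (g \<mu>) (sf_subst_mono (\<lambda>i. sf_pk_pleth (Suc i) f) \<mu>))"

definition sf_exp :: "sf \<Rightarrow> sf" where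
  "sf_exp h = sf_sum_family (\<lambda>n. sf_smul (1 / fact n) (sf_pow n h))"

definition Comm :: sf where
  "Comm = sf_diff (sf_exp (sf_sum_family (\<lambda>k. sf_smul (1 / of_nat (Suc k)) (sf_p (Suc k))))) sf_one"

definition PreLie :: sf where
  "PreLie = (THE f. f 0 = 0 \<and> f = sf_mult (sf_p 1) (sf_add sf_one (sf_pleth Comm f)))"

end

theory Submission
  imports Defs "HOL-Library.FuncSet"
begin

text \<open>
  Write \<open>F = \<Sigma> PreLie\<close>, \<open>H = exp (\<Sum>\<^sub>k p\<^sub>k / k) = 1 + Comm\<close> and \<open>U = H \<circ> F\<close>.
  The sign twist \<open>f \<mapsto> f(-p\<^sub>1, -p\<^sub>2, \<dots>)\<close> commutes with plethysm in the inner argument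
  and sends \<open>H\<close> to \<open>1 / H\<close>, so applying it to \<open>PreLie = p\<^sub>1 (H \<circ> PreLie)\<close> gives
  \<open>F = p\<^sub>1 (H \<circ> (-F)) = p\<^sub>1 / U\<close>, i.e. \<open>F U = p\<^sub>1\<close>. Among the \<open>p\<^sub>k \<circ> F\<close> only
  \<open>p\<^sub>1 \<circ> F = F\<close> involves \<open>p\<^sub>1\<close>, and \<open>\<partial>H/\<partial>p\<^sub>1 = H\<close>, so the chain rule gives
  \<open>\<partial>U = U \<partial>F\<close>. Differentiating \<open>F U = p\<^sub>1\<close> with respect to \<open>p\<^sub>1\<close> yields
  \<open>1 = U \<partial>F + F U \<partial>F = \<partial>(Comm \<circ> F) + p\<^sub>1 \<partial>F\<close>.

  Infinite sums, substitutions and the fixed point defining \<open>PreLie\<close> are controlled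
  degreewise (\<open>deg p\<^sub>k = k\<close>): series are compared on the finitely many monomials of
  degree at most \<open>N\<close>, for every \<open>N\<close>.
\<close>

section \<open>Monomials in the power sums\<close>

definition mono_degree :: "mono \<Rightarrow> nat" where
  "mono_degree m = (\<Sum>i\<in>Poly_Mapping.keys m. Suc i * Poly_Mapping.lookup m i)"

definition monos_upto :: "nat \<Rightarrow> mono set" where
  "monos_upto N = {m. mono_degree m \<le> N}"

definition mono_splits :: "mono \<Rightarrow> (mono \<times> mono) set" where
  "mono_splits m = {(a, b). a + b = m}"

abbreviation unit_mono :: "nat \<Rightarrow> mono" where
  "unit_mono j \<equiv> Poly_Mapping.single j 1"

lemma mono_degree_add: "mono_degree (a + b) = mono_degree a + mono_degree b"
  unfolding mono_degree_def by (rule setsum_keys_plus_distrib) (simp_all add: add_mult_distrib2)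

lemma mono_count_add: "mono_count (a + b) = mono_count a + mono_count b"
  unfolding mono_count_def by (rule setsum_keys_plus_distrib) simp_all

lemma mono_degree_zero [simp]: "mono_degree 0 = 0"
  by (simp add: mono_degree_def)

lemma mono_count_zero [simp]: "mono_count 0 = 0"
  by (simp add: mono_count_def)

lemma mono_degree_single [simp]: "mono_degree (Poly_Mapping.single k n) = Suc k * n"
  by (simp add: mono_degree_def)

lemma mono_count_single [simp]: "mono_count (Poly_Mapping.single k n) = n"
  by (simp add: mono_count_def)

lemma key_le_mono_degree:
  assumes "i \<in> Poly_Mapping.keys m"
  shows "Suc i \<le> mono_degree m" "Poly_Mapping.lookup m i \<le> mono_degree m"
proof -
  have le: "Suc i * Poly_Mapping.lookup m i \<le> mono_degree m"
    unfolding mono_degree_def using assms by (intro member_le_sum) auto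
  have "Poly_Mapping.lookup m i \<ge> 1" using assms by (simp add: in_keys_iff)
  then show "Suc i \<le> mono_degree m" "Poly_Mapping.lookup m i \<le> mono_degree m"
    using le by (metis dual_order.trans mult.right_neutral mult_le_mono2,
                 metis dual_order.trans le_add1 mult_Suc)
qed

lemma mono_degree_eq_0_iff [simp]: "mono_degree m = 0 \<longleftrightarrow> m = 0"
proof
  assume "mono_degree m = 0"
  then have "Poly_Mapping.keys m = {}"
    using key_le_mono_degree(1) by fastforce
  then show "m = 0" by simp
qed simp

lemma mono_count_eq_0_iff [simp]: "mono_count m = 0 \<longleftrightarrow> m = 0"
proof
  assume "mono_count m = 0"
  then have "\<forall>i\<in>Poly_Mapping.keys m. Poly_Mapping.lookup m i = 0"
    unfolding mono_count_def by simp
  then have "\<forall>i. Poly_Mapping.lookup m i = 0" by (auto simp: in_keys_iff)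
  then show "m = 0" by (intro poly_mapping_eqI) simp
qed simp

lemma unit_mono_inj [simplified, simp]: "unit_mono j = unit_mono k \<longleftrightarrow> j = k"
  by (metis lookup_single_eq lookup_single_not_eq zero_neq_one)

lemma unit_mono_neq_0 [simplified, simp]: "unit_mono k \<noteq> 0"
  by (metis lookup_single_eq lookup_zero zero_neq_one)

lemma add_unit_mono_neq_0 [simplified, simp]: "m + unit_mono j \<noteq> 0"
proof
  assume "m + unit_mono j = 0"
  then have "Poly_Mapping.lookup (m + unit_mono j) j = 0" by simp
  then show False by (simp add: lookup_add)
qed

lemma minus_plus_unit_mono:
  "Poly_Mapping.lookup a j \<noteq> 0 \<Longrightarrow> a - unit_mono j + unit_mono j = a"
  by (intro poly_mapping_eqI) (auto simp: lookup_add lookup_minus lookup_single when_def)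

lemma finite_monos_bounded:
  assumes "finite K"
  shows "finite {m::mono. Poly_Mapping.keys m \<subseteq> K \<and> (\<forall>i. Poly_Mapping.lookup m i \<le> B)}"
    (is "finite ?A")
proof -
  have inj: "inj_on (\<lambda>m. restrict (Poly_Mapping.lookup m) K) ?A"
  proof (rule inj_onI)
    fix x y assume x: "x \<in> ?A" and y: "y \<in> ?A"
      and eq: "restrict (Poly_Mapping.lookup x) K = restrict (Poly_Mapping.lookup y) K"
    show "x = y"
    proof (rule poly_mapping_eqI)
      fix i show "Poly_Mapping.lookup x i = Poly_Mapping.lookup y i"
      proof (cases "i \<in> K")
        case True then show ?thesis using fun_cong[OF eq, of i] by simp
      next
        case False then show ?thesis using x y by (metis (mono_tags, lifting) in_keys_iff mem_Collect_eq subsetD)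
      qed
    qed
  qed
  have "(\<lambda>m. restrict (Poly_Mapping.lookup m) K) ` ?A \<subseteq> PiE K (\<lambda>_. {..B})"
    by auto
  moreover have "finite (PiE K (\<lambda>_. {..B}))"
    using assms by (intro finite_PiE) auto
  ultimately show ?thesis
    using inj by (meson finite_imageD finite_subset)
qed

lemma finite_monos_upto [simp]: "finite (monos_upto N)"
proof -
  have "monos_upto N \<subseteq> {m. Poly_Mapping.keys m \<subseteq> {..<N} \<and> (\<forall>i. Poly_Mapping.lookup m i \<le> N)}"
  proof (rule subsetI, rule CollectI, intro conjI allI)
    fix m assume "m \<in> monos_upto N"
    then have deg: "mono_degree m \<le> N" by (simp add: monos_upto_def)
    show "Poly_Mapping.keys m \<subseteq> {..<N}"
      using key_le_mono_degree(1)[of _ m] deg by fastforce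
    fix i show "Poly_Mapping.lookup m i \<le> N"
      using key_le_mono_degree(2)[of i m] deg by (cases "i \<in> Poly_Mapping.keys m") (auto simp: in_keys_iff)
  qed
  then show ?thesis
    using finite_monos_bounded[of "{..<N}" N] finite_subset by blast
qed

lemma finite_mono_splits [simp]: "finite (mono_splits m)"
proof -
  have "mono_splits m \<subseteq> monos_upto (mono_degree m) \<times> monos_upto (mono_degree m)"
    by (auto simp: mono_splits_def monos_upto_def mono_degree_add)
  then show ?thesis
    by (rule finite_subset) simp
qed

lemma mono_splits_0: "mono_splits 0 = {(0, 0)}"
proof -
  have "a + b = 0 \<longleftrightarrow> a = 0 \<and> b = 0" for a b :: mono
    using mono_count_add[of a b] by auto
  then show ?thesis by (auto simp: mono_splits_def)
qed

lemma sum_mono_splits_swap: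
  "(\<Sum>(a, b)\<in>mono_splits m. \<phi> a b) = (\<Sum>(a, b)\<in>mono_splits m. \<phi> b a)"
  by (rule sum.reindex_bij_witness[of _ "\<lambda>(a,b). (b,a)" "\<lambda>(a,b). (b,a)"])
     (auto simp: mono_splits_def add.commute)

lemma sum_mono_splits_left_0:
  "(\<Sum>(a, b)\<in>mono_splits m. if a = 0 then \<phi> b else 0) = \<phi> m"
proof -
  have "(\<Sum>(a, b)\<in>mono_splits m. if a = 0 then \<phi> b else 0)
      = (\<Sum>x\<in>mono_splits m. if x = (0, m) then \<phi> m else 0)"
    by (rule sum.cong) (auto simp: mono_splits_def split: if_splits)
  also have "\<dots> = \<phi> m"
    using finite_mono_splits[of m] by (simp add: mono_splits_def)
  finally show ?thesis .
qed

lemma sum_mono_splits_shift: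
  "(\<Sum>(a, b)\<in>mono_splits (m + unit_mono j). of_nat (Poly_Mapping.lookup a j) * (\<phi> a b :: rat))
   = (\<Sum>(a, b)\<in>mono_splits m. of_nat (Poly_Mapping.lookup a j + 1) * \<phi> (a + unit_mono j) b)"
  (is "?L = ?R")
proof -
  let ?T = "{(a, b) \<in> mono_splits (m + unit_mono j). Poly_Mapping.lookup a j \<noteq> 0}"
  have "?L = (\<Sum>(a, b)\<in>?T. of_nat (Poly_Mapping.lookup a j) * \<phi> a b)"
    by (rule sum.mono_neutral_right) auto
  also have "\<dots> = ?R"
  proof (rule sum.reindex_bij_witness[of _ "\<lambda>(a, b). (a + unit_mono j, b)" "\<lambda>(a, b). (a - unit_mono j, b)"])
    fix x assume "x \<in> ?T"
    then obtain a b where x: "x = (a, b)" "a + b = m + unit_mono j" "Poly_Mapping.lookup a j \<noteq> 0"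
      by (auto simp: mono_splits_def)
    note a = minus_plus_unit_mono[OF x(3)]
    have "a - unit_mono j + b + unit_mono j = m + unit_mono j"
      using x(2) a by (metis add.commute add.left_commute)
    then show "(case x of (a, b) \<Rightarrow> (a - unit_mono j, b)) \<in> mono_splits m"
      using x by (simp add: mono_splits_def)
    show "(case (case x of (a, b) \<Rightarrow> (a - unit_mono j, b)) of (a, b) \<Rightarrow> (a + unit_mono j, b)) = x"
      using x a by simp
    have "Poly_Mapping.lookup (a - unit_mono j) j + 1 = Poly_Mapping.lookup a j"
      using x(3) by (simp add: lookup_minus)
    from arg_cong[OF this, of "of_nat :: nat \<Rightarrow> rat"]
    show "(case (case x of (a, b) \<Rightarrow> (a - unit_mono j, b)) of
            (a, b) \<Rightarrow> of_nat (Poly_Mapping.lookup a j + 1) * \<phi> (a + unit_mono j) b)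
        = (case x of (a, b) \<Rightarrow> of_nat (Poly_Mapping.lookup a j) * \<phi> a b)"
      using x a by simp
  next
    fix y assume "y \<in> mono_splits m"
    then obtain a b where y: "y = (a, b)" "a + b = m" by (auto simp: mono_splits_def)
    show "(case (case y of (a, b) \<Rightarrow> (a + unit_mono j, b)) of (a, b) \<Rightarrow> (a - unit_mono j, b)) = y"
      using y by simp
    have "a + unit_mono j + b = m + unit_mono j" using y by (metis add.commute add.left_commute)
    then show "(case y of (a, b) \<Rightarrow> (a + unit_mono j, b)) \<in> ?T"
      using y by (simp add: mono_splits_def lookup_add)
  qed
  finally show ?thesis .
qed

section \<open>The ring of series\<close>

lemma sf_mult_mono_splits: "sf_mult f g m = (\<Sum>(a, b)\<in>mono_splits m. f a * g b)"
  by (simp add: sf_mult_def mono_splits_def)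

lemma sf_mult_comm: "sf_mult f g = sf_mult g f"
  unfolding sf_mult_mono_splits by (subst sum_mono_splits_swap) (simp add: mult.commute)

lemma sf_mult_assoc: "sf_mult (sf_mult f g) h = sf_mult f (sf_mult g h)"
proof
  fix m
  have "sf_mult (sf_mult f g) h m = (\<Sum>(x, c)\<in>mono_splits m. \<Sum>(a, b)\<in>mono_splits x. f a * g b * h c)"
    unfolding sf_mult_mono_splits by (simp add: sum_distrib_right case_prod_beta)
  also have "\<dots> = (\<Sum>xc\<in>mono_splits m. \<Sum>ab\<in>mono_splits (fst xc). f (fst ab) * g (snd ab) * h (snd xc))"
    by (simp add: case_prod_beta)
  also have "\<dots> = (\<Sum>z\<in>Sigma (mono_splits m) (\<lambda>xc. mono_splits (fst xc)). f (fst (snd z)) * g (snd (snd z)) * h (snd (fst z)))"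
    by (subst sum.Sigma) (auto simp: case_prod_beta)
  also have "\<dots> = (\<Sum>z\<in>Sigma (mono_splits m) (\<lambda>ay. mono_splits (snd ay)). f (fst (fst z)) * g (fst (snd z)) * h (snd (snd z)))"
    by (rule sum.reindex_bij_witness[of _ "\<lambda>((a,y),(b,c)). ((a+b,c),(a,b))" "\<lambda>((x,c),(a,b)). ((a,b+c),(b,c))"])
       (auto simp: mono_splits_def add.assoc)
  also have "\<dots> = (\<Sum>ay\<in>mono_splits m. \<Sum>bc\<in>mono_splits (snd ay). f (fst ay) * g (fst bc) * h (snd bc))"
    by (subst sum.Sigma) (auto simp: case_prod_beta)
  also have "\<dots> = (\<Sum>(a, y)\<in>mono_splits m. \<Sum>(b, c)\<in>mono_splits y. f a * g b * h c)"
    by (simp add: case_prod_beta)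
  also have "\<dots> = sf_mult f (sf_mult g h) m"
    unfolding sf_mult_mono_splits by (simp add: sum_distrib_left case_prod_beta mult.assoc)
  finally show "sf_mult (sf_mult f g) h m = sf_mult f (sf_mult g h) m" .
qed

lemma sf_mult_one: "sf_mult sf_one g = g"
proof
  fix m
  have "sf_mult sf_one g m = (\<Sum>(a, b)\<in>mono_splits m. if a = 0 then g b else 0)"
    unfolding sf_mult_mono_splits by (rule sum.cong) (auto simp: sf_one_def sf_const_def)
  then show "sf_mult sf_one g m = g m"
    by (simp only: sum_mono_splits_left_0)
qed

lemma sf_mult_distrib: "sf_mult (sf_add f g) h = sf_add (sf_mult f h) (sf_mult g h)"
  unfolding sf_mult_mono_splits sf_add_def
  by (simp add: fun_eq_iff distrib_right sum.distrib case_prod_beta)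

typedef sfps = "UNIV :: sf set" morphisms coeff Abs_sfps by simp

setup_lifting type_definition_sfps

lemma sfps_eqI: "(\<And>m. coeff f m = coeff g m) \<Longrightarrow> f = g"
  by (metis coeff_inverse ext)

instantiation sfps :: comm_ring_1
begin
lift_definition zero_sfps :: sfps is "\<lambda>_. 0" .
lift_definition one_sfps :: sfps is sf_one .
lift_definition plus_sfps :: "sfps \<Rightarrow> sfps \<Rightarrow> sfps" is sf_add .
lift_definition minus_sfps :: "sfps \<Rightarrow> sfps \<Rightarrow> sfps" is sf_diff .
lift_definition uminus_sfps :: "sfps \<Rightarrow> sfps" is "\<lambda>f m. - f m" .
lift_definition times_sfps :: "sfps \<Rightarrow> sfps \<Rightarrow> sfps" is sf_mult .
instance
proof
  fix a b c :: sfps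
  show "a * b * c = a * (b * c)" by transfer (rule sf_mult_assoc)
  show "a * b = b * a" by transfer (rule sf_mult_comm)
  show "1 * a = a" by transfer (rule sf_mult_one)
  show "(a + b) * c = a * c + b * c" by transfer (rule sf_mult_distrib)
  show "a + b + c = a + (b + c)" by transfer (simp add: sf_add_def add.assoc)
  show "a + b = b + a" by transfer (simp add: sf_add_def add.commute)
  show "0 + a = a" by transfer (simp add: sf_add_def)
  show "- a + a = 0" by transfer (simp add: sf_add_def)
  show "a - b = a + - b" by transfer (simp add: sf_add_def sf_diff_def)
  show "(0::sfps) \<noteq> 1" by transfer (simp add: sf_one_def sf_const_def fun_eq_iff)
qed
end

lemma coeff_Abs [simp]: "coeff (Abs_sfps f) = f"
  by (simp add: Abs_sfps_inverse)

lemma coeff_add [simp]: "coeff (f + g) m = coeff f m + coeff g m"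
  by transfer (simp add: sf_add_def)

lemma coeff_diff [simp]: "coeff (f - g) m = coeff f m - coeff g m"
  by transfer (simp add: sf_diff_def)

lemma coeff_uminus [simp]: "coeff (- f) m = - coeff f m"
  by transfer simp

lemma coeff_zero [simp]: "coeff 0 m = 0"
  by transfer simp

lemma coeff_one: "coeff 1 m = (if m = 0 then 1 else 0)"
  by transfer (simp add: sf_one_def sf_const_def)

lemma coeff_mult: "coeff (f * g) m = (\<Sum>(a, b)\<in>mono_splits m. coeff f a * coeff g b)"
  by transfer (simp add: sf_mult_mono_splits)

lemma coeff_mult_0: "coeff (f * g) 0 = coeff f 0 * coeff g 0"
  by (simp add: coeff_mult mono_splits_0)

lemma coeff_sum: "coeff (sum F S) m = (\<Sum>i\<in>S. coeff (F i) m)"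
  by (induction S rule: infinite_finite_induct) auto

lemma coeff_power: "coeff (f ^ n) = sf_pow n (coeff f)"
  by (induction n) (simp_all add: one_sfps.rep_eq times_sfps.rep_eq)

lift_definition scalar :: "rat \<Rightarrow> sfps" is sf_const .

lemma coeff_scalar: "coeff (scalar c) m = (if m = 0 then c else 0)"
  by transfer (simp add: sf_const_def)

lemma coeff_scalar_mult [simp]: "coeff (scalar c * f) m = c * coeff f m"
proof -
  have "coeff (scalar c * f) m = (\<Sum>(a, b)\<in>mono_splits m. if a = 0 then c * coeff f b else 0)"
    unfolding coeff_mult by (rule sum.cong) (auto simp: coeff_scalar)
  then show ?thesis
    by (simp only: sum_mono_splits_left_0)
qed

lemma coeff_scalar_mult_eq_sf_smul: "coeff (scalar c * f) = sf_smul c (coeff f)"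
  by (rule ext) (simp add: sf_smul_def)

lemma scalar_one [simp]: "scalar 1 = 1"
  by transfer (simp add: sf_one_def)

lemma scalar_zero [simp]: "scalar 0 = 0"
  by (rule sfps_eqI) (simp add: coeff_scalar)

lemma scalar_add: "scalar (a + b) = scalar a + scalar b"
  by (rule sfps_eqI) (simp add: coeff_scalar)

lemma scalar_mult: "scalar (a * b) = scalar a * scalar b"
  by (rule sfps_eqI) (simp add: coeff_scalar)

lemma scalar_uminus: "scalar (- a) = - scalar a"
  by (rule sfps_eqI) (simp add: coeff_scalar)

lemma scalar_of_nat: "scalar (of_nat n) = of_nat n"
  by (induction n) (simp_all add: scalar_add)

lemma scalar_sum: "scalar (sum f S) = (\<Sum>i\<in>S. scalar (f i))"
  by (induction S rule: infinite_finite_induct) (auto simp: scalar_add)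

lemma scalar_power: "scalar (c ^ n) = scalar c ^ n"
  by (induction n) (auto simp: scalar_mult)

lift_definition p1 :: sfps is "sf_p 1" .

lemma coeff_p1: "coeff p1 m = (if m = unit_mono 0 then 1 else 0)"
  by transfer (simp add: sf_p_def)

definition family_sum :: "('i \<Rightarrow> sfps) \<Rightarrow> sfps" where
  "family_sum F = Abs_sfps (sf_sum_family (\<lambda>i. coeff (F i)))"

section \<open>Comparing series degreewise\<close>

definition vanishes_below :: "nat \<Rightarrow> sfps \<Rightarrow> bool" where
  "vanishes_below d f \<longleftrightarrow> (\<forall>m. coeff f m \<noteq> 0 \<longrightarrow> d \<le> mono_degree m)"

lemma vanishes_belowD: "vanishes_below d f \<Longrightarrow> mono_degree m < d \<Longrightarrow> coeff f m = 0"
  unfolding vanishes_below_def by force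

lemma vanishes_below_0 [simp]: "vanishes_below 0 f"
  by (simp add: vanishes_below_def)

lemma vanishes_below_zero [simp]: "vanishes_below d 0"
  by (simp add: vanishes_below_def)

lemma vanishes_below_mono: "vanishes_below d f \<Longrightarrow> d' \<le> d \<Longrightarrow> vanishes_below d' f"
  unfolding vanishes_below_def by force

lemma vanishes_below_add: "vanishes_below d f \<Longrightarrow> vanishes_below d g \<Longrightarrow> vanishes_below d (f + g)"
  unfolding vanishes_below_def by force

lemma vanishes_below_uminus_iff [simp]: "vanishes_below d (- f) = vanishes_below d f"
  unfolding vanishes_below_def by force

lemma vanishes_below_sum: "(\<And>i. i \<in> S \<Longrightarrow> vanishes_below d (F i)) \<Longrightarrow> vanishes_below d (sum F S)"
  by (induction S rule: infinite_finite_induct) (auto intro: vanishes_below_add)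

lemma vanishes_below_mult: "vanishes_below a f \<Longrightarrow> vanishes_below b g \<Longrightarrow> vanishes_below (a + b) (f * g)"
proof -
  assume f: "vanishes_below a f" and g: "vanishes_below b g"
  show "vanishes_below (a + b) (f * g)"
    unfolding vanishes_below_def
  proof (intro allI impI)
    fix m assume "coeff (f * g) m \<noteq> 0"
    then obtain x where x: "x \<in> mono_splits m" "(case x of (u, v) \<Rightarrow> coeff f u * coeff g v) \<noteq> 0"
      unfolding coeff_mult by (meson sum.not_neutral_contains_not_neutral)
    obtain u v where "x = (u, v)" by force
    with x have "u + v = m" "coeff f u \<noteq> 0" "coeff g v \<noteq> 0" by (auto simp: mono_splits_def)
    then show "a + b \<le> mono_degree m" using f g unfolding vanishes_below_def
      by (metis add_le_mono mono_degree_add)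
  qed
qed

lemma vanishes_below_mult_left: "vanishes_below a f \<Longrightarrow> vanishes_below a (f * g)"
  using vanishes_below_mult[of a f 0 g] by simp

lemma vanishes_below_mult_right: "vanishes_below a g \<Longrightarrow> vanishes_below a (f * g)"
  using vanishes_below_mult[of 0 f a g] by simp

lemma vanishes_below_power: "vanishes_below a f \<Longrightarrow> vanishes_below (n * a) (f ^ n)"
  by (induction n) (auto intro: vanishes_below_mult)

lemma vanishes_below_prod:
  "(\<And>i. i \<in> S \<Longrightarrow> vanishes_below (d i) (F i)) \<Longrightarrow> vanishes_below (\<Sum>i\<in>S. d i) (prod F S)"
  by (induction S rule: infinite_finite_induct) (auto intro: vanishes_below_mult)

lemma vanishes_below_scalar_mult: "vanishes_below d f \<Longrightarrow> vanishes_below d (scalar c * f)"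
  by (simp add: vanishes_below_def)

lemma vanishes_below_p1: "vanishes_below 1 p1"
  by (auto simp: vanishes_below_def coeff_p1)

definition agree_upto :: "nat \<Rightarrow> sfps \<Rightarrow> sfps \<Rightarrow> bool" where
  "agree_upto N f g \<longleftrightarrow> vanishes_below (Suc N) (f - g)"

lemma agree_upto_iff: "agree_upto N f g \<longleftrightarrow> (\<forall>m. mono_degree m \<le> N \<longrightarrow> coeff f m = coeff g m)"
  unfolding agree_upto_def vanishes_below_def by force

lemma agree_upto_0_iff: "agree_upto 0 f g \<longleftrightarrow> coeff f 0 = coeff g 0"
  by (simp add: agree_upto_iff)

lemma agree_upto_refl [simp]: "agree_upto N f f"
  by (simp add: agree_upto_iff)

lemma agree_upto_sym: "agree_upto N f g \<Longrightarrow> agree_upto N g f"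
  by (simp add: agree_upto_iff)

lemma agree_upto_trans [trans]: "agree_upto N f g \<Longrightarrow> agree_upto N g h \<Longrightarrow> agree_upto N f h"
  by (simp add: agree_upto_iff)

lemma eq_agree_upto_trans [trans]: "f = g \<Longrightarrow> agree_upto N g h \<Longrightarrow> agree_upto N f h"
  by simp

lemma agree_upto_mono: "agree_upto N f g \<Longrightarrow> M \<le> N \<Longrightarrow> agree_upto M f g"
  by (simp add: agree_upto_iff)

lemma agree_upto_add: "agree_upto N f f' \<Longrightarrow> agree_upto N g g' \<Longrightarrow> agree_upto N (f + g) (f' + g')"
  by (simp add: agree_upto_iff)

lemma agree_upto_uminus: "agree_upto N f f' \<Longrightarrow> agree_upto N (- f) (- f')"
  by (simp add: agree_upto_iff)

lemma agree_upto_mult: "agree_upto N f f' \<Longrightarrow> agree_upto N g g' \<Longrightarrow> agree_upto N (f * g) (f' * g')"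
proof -
  assume "agree_upto N f f'" "agree_upto N g g'"
  then have "vanishes_below (Suc N) ((f - f') * g)" "vanishes_below (Suc N) (f' * (g - g'))"
    unfolding agree_upto_def by (auto intro: vanishes_below_mult_left vanishes_below_mult_right)
  then have "vanishes_below (Suc N) ((f - f') * g + f' * (g - g'))" by (rule vanishes_below_add)
  moreover have "(f - f') * g + f' * (g - g') = f * g - f' * g'"
    by (simp add: algebra_simps)
  ultimately show ?thesis by (simp add: agree_upto_def)
qed

lemma agree_upto_sum: "(\<And>i. i \<in> S \<Longrightarrow> agree_upto N (F i) (G i)) \<Longrightarrow> agree_upto N (sum F S) (sum G S)"
  by (induction S rule: infinite_finite_induct) (auto intro: agree_upto_add)

lemma agree_upto_prod: "(\<And>i. i \<in> S \<Longrightarrow> agree_upto N (F i) (G i)) \<Longrightarrow> agree_upto N (prod F S) (prod G S)"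
  by (induction S rule: infinite_finite_induct) (auto intro: agree_upto_mult)

lemma agree_upto_power: "agree_upto N f g \<Longrightarrow> agree_upto N (f ^ n) (g ^ n)"
  by (induction n) (auto intro: agree_upto_mult)

lemma sfps_eqI_agree_upto: "(\<And>N. agree_upto N f g) \<Longrightarrow> f = g"
  by (rule sfps_eqI) (auto simp: agree_upto_iff)

lemma family_sum_agree_upto:
  assumes fin: "finite {i. w i \<le> N}" and ord: "\<And>i. vanishes_below (w i) (F i)"
  shows "agree_upto N (family_sum F) (sum F {i. w i \<le> N})"
  unfolding agree_upto_iff
proof (intro allI impI)
  fix m assume m: "mono_degree m \<le> N"
  have sub: "{i. coeff (F i) m \<noteq> 0} \<subseteq> {i. w i \<le> N}"
    using ord m unfolding vanishes_below_def by (force intro: order_trans)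
  have "coeff (family_sum F) m = (\<Sum>i\<in>{i. coeff (F i) m \<noteq> 0}. coeff (F i) m)"
    by (simp add: family_sum_def sf_sum_family_def)
  also have "\<dots> = (\<Sum>i\<in>{i. w i \<le> N}. coeff (F i) m)"
    using sub fin by (intro sum.mono_neutral_left) auto
  also have "\<dots> = coeff (sum F {i. w i \<le> N}) m"
    by (simp add: coeff_sum)
  finally show "coeff (family_sum F) m = coeff (sum F {i. w i \<le> N}) m" .
qed

section \<open>Partial derivatives\<close>

lift_definition pdiff :: "nat \<Rightarrow> sfps \<Rightarrow> sfps" is
  "\<lambda>j f m. of_nat (Poly_Mapping.lookup m j + 1) * f (m + unit_mono j)" .

lemma coeff_pdiff: "coeff (pdiff j f) m = of_nat (Poly_Mapping.lookup m j + 1) * coeff f (m + unit_mono j)"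
  by transfer simp

lemma pdiff_add [simp]: "pdiff j (f + g) = pdiff j f + pdiff j g"
  by (rule sfps_eqI) (simp add: coeff_pdiff algebra_simps)

lemma pdiff_diff [simp]: "pdiff j (f - g) = pdiff j f - pdiff j g"
  by (rule sfps_eqI) (simp add: coeff_pdiff algebra_simps)

lemma pdiff_sum: "pdiff j (sum F S) = (\<Sum>i\<in>S. pdiff j (F i))"
  by (induction S rule: infinite_finite_induct) (auto simp: coeff_pdiff intro!: sfps_eqI)

lemma pdiff_scalar [simp]: "pdiff j (scalar c) = 0"
  by (rule sfps_eqI) (simp add: coeff_pdiff coeff_scalar)

lemma pdiff_one [simp]: "pdiff j 1 = 0"
  using pdiff_scalar[of j 1] by simp

lemma pdiff_p1: "pdiff 0 p1 = 1"
  by (rule sfps_eqI) (auto simp: coeff_pdiff coeff_p1 coeff_one)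

lemma pdiff_agree_upto: "agree_upto (N + Suc j) f g \<Longrightarrow> agree_upto N (pdiff j f) (pdiff j g)"
  by (auto simp: agree_upto_iff coeff_pdiff mono_degree_add)

lemma pdiff_mult: "pdiff j (f * g) = pdiff j f * g + f * pdiff j g"
proof (rule sfps_eqI)
  fix m
  have "coeff (pdiff j (f * g)) m
      = (\<Sum>(a, b)\<in>mono_splits (m + unit_mono j). of_nat (Poly_Mapping.lookup a j + Poly_Mapping.lookup b j) * (coeff f a * coeff g b))"
    unfolding coeff_pdiff coeff_mult sum_distrib_left
  proof (rule sum.cong)
    fix x assume "x \<in> mono_splits (m + unit_mono j)"
    then obtain a b where x: "x = (a, b)" and "a + b = m + unit_mono j"
      by (auto simp: mono_splits_def)
    then have "Poly_Mapping.lookup a j + Poly_Mapping.lookup b j = Poly_Mapping.lookup m j + 1"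
      by (metis lookup_add lookup_single_eq)
    then show "of_nat (Poly_Mapping.lookup m j + 1) * (case x of (a, b) \<Rightarrow> coeff f a * coeff g b)
      = (case x of (a, b) \<Rightarrow> of_nat (Poly_Mapping.lookup a j + Poly_Mapping.lookup b j) * (coeff f a * coeff g b))"
      by (simp add: x)
  qed simp
  also have "\<dots> = (\<Sum>(a, b)\<in>mono_splits (m + unit_mono j). of_nat (Poly_Mapping.lookup a j) * (coeff f a * coeff g b))
      + (\<Sum>(a, b)\<in>mono_splits (m + unit_mono j). of_nat (Poly_Mapping.lookup b j) * (coeff g b * coeff f a))"
    by (simp add: sum.distrib[symmetric] case_prod_beta algebra_simps)
  also have "(\<Sum>(a, b)\<in>mono_splits (m + unit_mono j). of_nat (Poly_Mapping.lookup b j) * (coeff g b * coeff f a))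
      = (\<Sum>(a, b)\<in>mono_splits (m + unit_mono j). of_nat (Poly_Mapping.lookup a j) * (coeff g a * coeff f b))"
    by (rule sum_mono_splits_swap)
  also have "(\<Sum>(a, b)\<in>mono_splits (m + unit_mono j). of_nat (Poly_Mapping.lookup a j) * (coeff f a * coeff g b))
      = coeff (pdiff j f * g) m"
    unfolding sum_mono_splits_shift coeff_mult coeff_pdiff by (simp add: mult.assoc)
  also have "(\<Sum>(a, b)\<in>mono_splits (m + unit_mono j). of_nat (Poly_Mapping.lookup a j) * (coeff g a * coeff f b))
      = coeff (pdiff j g * f) m"
    unfolding sum_mono_splits_shift coeff_mult coeff_pdiff by (simp add: mult.assoc)
  finally show "coeff (pdiff j (f * g)) m = coeff (pdiff j f * g + f * pdiff j g) m"
    by (simp add: mult.commute)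
qed

lemma pdiff_scalar_mult [simp]: "pdiff j (scalar c * f) = scalar c * pdiff j f"
  by (simp add: pdiff_mult)

lemma pdiff_power: "pdiff j (f ^ Suc n) = of_nat (Suc n) * f ^ n * pdiff j f"
  by (induction n) (simp_all add: pdiff_mult algebra_simps)

lemma pdiff_prod_zero: "(\<And>i. i \<in> S \<Longrightarrow> pdiff j (F i) = 0) \<Longrightarrow> pdiff j (prod F S) = 0"
  by (induction S rule: infinite_finite_induct) (auto simp: pdiff_mult)

lemma pdiff_power_zero: "pdiff j f = 0 \<Longrightarrow> pdiff j (f ^ n) = 0"
  by (cases n) (simp, simp only: pdiff_power, simp)

lemma pdiff_all_zero_imp_scalar:
  assumes "\<And>j. pdiff j f = 0"
  shows "f = scalar (coeff f 0)"
proof (rule sfps_eqI)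
  fix m
  show "coeff f m = coeff (scalar (coeff f 0)) m"
  proof (cases "m = 0")
    case False
    then obtain j where "j \<in> Poly_Mapping.keys m" by fastforce
    then have m: "m - unit_mono j + unit_mono j = m"
      by (intro minus_plus_unit_mono) (simp add: in_keys_iff)
    have "coeff (pdiff j f) (m - unit_mono j) = 0" using assms by simp
    then have "coeff f m = 0" unfolding coeff_pdiff m by simp
    then show ?thesis using False by (simp add: coeff_scalar)
  qed (simp add: coeff_scalar)
qed

section \<open>Substituting series for the power sums\<close>

definition eval_mono :: "(nat \<Rightarrow> sfps) \<Rightarrow> mono \<Rightarrow> sfps" where
  "eval_mono h \<mu> = (\<Prod>i\<in>Poly_Mapping.keys \<mu>. h i ^ Poly_Mapping.lookup \<mu> i)"

lemma eval_mono_superset: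
  assumes "finite S" "Poly_Mapping.keys \<mu> \<subseteq> S"
  shows "eval_mono h \<mu> = (\<Prod>i\<in>S. h i ^ Poly_Mapping.lookup \<mu> i)"
  unfolding eval_mono_def using assms
  by (intro prod.mono_neutral_left) (auto simp: in_keys_iff)

lemma eval_mono_zero [simp]: "eval_mono h 0 = 1"
  by (simp add: eval_mono_def)

lemma eval_mono_add: "eval_mono h (a + b) = eval_mono h a * eval_mono h b"
proof -
  let ?S = "Poly_Mapping.keys a \<union> Poly_Mapping.keys b"
  have "eval_mono h (a + b) = (\<Prod>i\<in>?S. h i ^ Poly_Mapping.lookup (a + b) i)"
    by (rule eval_mono_superset) (auto dest: keys_add[THEN subsetD])
  also have "\<dots> = (\<Prod>i\<in>?S. h i ^ Poly_Mapping.lookup a i) * (\<Prod>i\<in>?S. h i ^ Poly_Mapping.lookup b i)"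
    by (simp add: lookup_add power_add prod.distrib)
  also have "\<dots> = eval_mono h a * eval_mono h b"
    using eval_mono_superset[of ?S a h] eval_mono_superset[of ?S b h] by simp
  finally show ?thesis .
qed

lemma eval_mono_split_0:
  "eval_mono h \<mu>
    = h 0 ^ Poly_Mapping.lookup \<mu> 0 * (\<Prod>i\<in>Poly_Mapping.keys \<mu> - {0}. h i ^ Poly_Mapping.lookup \<mu> i)"
proof -
  have "eval_mono h \<mu> = (\<Prod>i\<in>insert 0 (Poly_Mapping.keys \<mu>). h i ^ Poly_Mapping.lookup \<mu> i)"
    by (rule eval_mono_superset) auto
  then show ?thesis
    by (simp add: prod.insert_remove)
qed

lemma eval_mono_minus_unit_mono_0:
  "eval_mono h (\<mu> - unit_mono 0)
    = h 0 ^ (Poly_Mapping.lookup \<mu> 0 - 1) * (\<Prod>i\<in>Poly_Mapping.keys \<mu> - {0}. h i ^ Poly_Mapping.lookup \<mu> i)"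
proof -
  have "(\<Prod>i\<in>Poly_Mapping.keys (\<mu> - unit_mono 0) - {0}. h i ^ Poly_Mapping.lookup (\<mu> - unit_mono 0) i)
      = (\<Prod>i\<in>Poly_Mapping.keys \<mu> - {0}. h i ^ Poly_Mapping.lookup \<mu> i)"
    by (rule prod.cong) (auto simp: in_keys_iff lookup_minus lookup_single)
  then show ?thesis
    using eval_mono_split_0[of h "\<mu> - unit_mono 0"] by (simp add: lookup_minus)
qed

lemma eval_mono_uminus: "eval_mono (\<lambda>i. - h i) \<mu> = (-1) ^ mono_count \<mu> * eval_mono h \<mu>"
proof -
  have "eval_mono (\<lambda>i. - h i) \<mu>
      = (\<Prod>i\<in>Poly_Mapping.keys \<mu>. (-1) ^ Poly_Mapping.lookup \<mu> i * h i ^ Poly_Mapping.lookup \<mu> i)"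
    unfolding eval_mono_def by (rule prod.cong) (rule refl, rule power_minus)
  also have "\<dots> = (\<Prod>i\<in>Poly_Mapping.keys \<mu>. (-1) ^ Poly_Mapping.lookup \<mu> i) * eval_mono h \<mu>"
    unfolding eval_mono_def by (rule prod.distrib)
  also have "(\<Prod>i\<in>Poly_Mapping.keys \<mu>. (-1::sfps) ^ Poly_Mapping.lookup \<mu> i) = (-1) ^ mono_count \<mu>"
    unfolding mono_count_def by (rule power_sum[symmetric])
  finally show ?thesis .
qed

text \<open>
  Substituting \<open>h k\<close> for \<open>p\<^sub>k\<^sub>+\<^sub>1\<close> is well defined and degreewise finite as soon as
  \<open>h k\<close> has no terms of degree at most \<open>k\<close>.
\<close>

definition admissible :: "(nat \<Rightarrow> sfps) \<Rightarrow> bool" where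
  "admissible h \<longleftrightarrow> (\<forall>k. vanishes_below (Suc k) (h k))"

lemma vanishes_below_eval_mono:
  "admissible h \<Longrightarrow> vanishes_below (mono_degree \<mu>) (eval_mono h \<mu>)"
  unfolding eval_mono_def mono_degree_def admissible_def
  by (rule vanishes_below_prod) (metis mult.commute vanishes_below_power)

definition subst :: "(nat \<Rightarrow> sfps) \<Rightarrow> sfps \<Rightarrow> sfps" where
  "subst h g = family_sum (\<lambda>\<mu>. scalar (coeff g \<mu>) * eval_mono h \<mu>)"

definition subst_upto :: "nat \<Rightarrow> (nat \<Rightarrow> sfps) \<Rightarrow> sfps \<Rightarrow> sfps" where
  "subst_upto N h g = (\<Sum>\<mu>\<in>monos_upto N. scalar (coeff g \<mu>) * eval_mono h \<mu>)"

lemma subst_agree_upto: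
  assumes "admissible h"
  shows "agree_upto N (subst h g) (subst_upto N h g)"
proof -
  have "agree_upto N (subst h g) (\<Sum>\<mu>\<in>{\<mu>. mono_degree \<mu> \<le> N}. scalar (coeff g \<mu>) * eval_mono h \<mu>)"
    unfolding subst_def
    by (rule family_sum_agree_upto)
       (simp_all add: finite_monos_upto[unfolded monos_upto_def] vanishes_below_scalar_mult
         vanishes_below_eval_mono assms)
  then show ?thesis
    by (simp add: subst_upto_def monos_upto_def)
qed

lemma subst_eqI:
  assumes "admissible h" "\<And>N. agree_upto N (subst_upto N h g) F"
  shows "subst h g = F"
proof (rule sfps_eqI_agree_upto)
  fix N
  show "agree_upto N (subst h g) F"
    using subst_agree_upto[OF assms(1)] assms(2) by (rule agree_upto_trans)
qed

lemma subst_upto_add: "subst_upto N h (f + g) = subst_upto N h f + subst_upto N h g"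
  by (simp add: subst_upto_def scalar_add sum.distrib distrib_right)

lemma subst_upto_uminus: "subst_upto N h (- f) = - subst_upto N h f"
  by (simp add: subst_upto_def scalar_uminus sum_negf)

lemma subst_upto_one: "subst_upto N h 1 = 1"
proof -
  have "subst_upto N h 1 = (\<Sum>\<mu>\<in>monos_upto N. if \<mu> = 0 then 1 else 0)"
    unfolding subst_upto_def by (rule sum.cong) (auto simp: coeff_one)
  also have "\<dots> = 1"
    using finite_monos_upto[of N] by (simp add: monos_upto_def)
  finally show ?thesis .
qed

lemma subst_add:
  assumes "admissible h" shows "subst h (f + g) = subst h f + subst h g"
proof (rule subst_eqI[OF assms])
  fix N
  show "agree_upto N (subst_upto N h (f + g)) (subst h f + subst h g)"
    unfolding subst_upto_add by (intro agree_upto_add subst_agree_upto[THEN agree_upto_sym] assms)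
qed

lemma subst_uminus:
  assumes "admissible h" shows "subst h (- f) = - subst h f"
proof (rule subst_eqI[OF assms])
  fix N
  show "agree_upto N (subst_upto N h (- f)) (- subst h f)"
    unfolding subst_upto_uminus by (intro agree_upto_uminus subst_agree_upto[THEN agree_upto_sym] assms)
qed

lemma subst_diff:
  assumes "admissible h" shows "subst h (f - g) = subst h f - subst h g"
  using subst_add[OF assms, of f "- g"] subst_uminus[OF assms, of g] by simp

lemma subst_one:
  assumes "admissible h" shows "subst h 1 = 1"
  by (rule subst_eqI[OF assms]) (simp add: subst_upto_one)

lemma sum_monos_upto_mono_splits:
  "(\<Sum>\<mu>\<in>monos_upto N. \<Sum>x\<in>mono_splits \<mu>. \<phi> x)
   = (\<Sum>x\<in>{(a, b). mono_degree a + mono_degree b \<le> N}. \<phi> x)"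
proof -
  have "(\<Sum>\<mu>\<in>monos_upto N. \<Sum>x\<in>mono_splits \<mu>. \<phi> x) = (\<Sum>z\<in>Sigma (monos_upto N) mono_splits. \<phi> (snd z))"
    by (subst sum.Sigma) (auto simp: case_prod_beta)
  also have "\<dots> = (\<Sum>x\<in>snd ` Sigma (monos_upto N) mono_splits. \<phi> x)"
    by (rule sum.reindex[symmetric, unfolded comp_def]) (auto simp: inj_on_def mono_splits_def)
  also have "snd ` Sigma (monos_upto N) mono_splits = {(a, b). mono_degree a + mono_degree b \<le> N}"
  proof (rule set_eqI)
    fix x :: "mono \<times> mono"
    obtain a b where x: "x = (a, b)" by force
    have "x \<in> snd ` Sigma (monos_upto N) mono_splits \<longleftrightarrow> (a + b, x) \<in> Sigma (monos_upto N) mono_splits"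
      by (force simp: x mono_splits_def)
    then show "x \<in> snd ` Sigma (monos_upto N) mono_splits \<longleftrightarrow> x \<in> {(a, b). mono_degree a + mono_degree b \<le> N}"
      by (simp add: x mono_splits_def monos_upto_def mono_degree_add)
  qed
  finally show ?thesis .
qed

lemma subst_upto_mult:
  assumes h: "admissible h"
  shows "agree_upto N (subst_upto N h (f * g)) (subst_upto N h f * subst_upto N h g)"
proof -
  define \<phi> where "\<phi> x = scalar (coeff f (fst x)) * eval_mono h (fst x) *
    (scalar (coeff g (snd x)) * eval_mono h (snd x))" for x
  let ?M = "monos_upto N \<times> monos_upto N"
  let ?Q = "{(a, b). mono_degree a + mono_degree b \<le> N}"
  have "subst_upto N h (f * g) = (\<Sum>\<mu>\<in>monos_upto N. \<Sum>x\<in>mono_splits \<mu>. \<phi> x)"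
    unfolding subst_upto_def coeff_mult scalar_sum sum_distrib_right
    by (intro sum.cong refl) (auto simp: \<phi>_def mono_splits_def scalar_mult eval_mono_add algebra_simps)
  also have "\<dots> = (\<Sum>x\<in>?Q. \<phi> x)"
    by (rule sum_monos_upto_mono_splits)
  also have "agree_upto N \<dots> (\<Sum>x\<in>?M. \<phi> x)"
  proof -
    have "?Q \<subseteq> ?M" by (auto simp: monos_upto_def)
    then have "(\<Sum>x\<in>?M. \<phi> x) = (\<Sum>x\<in>?M - ?Q. \<phi> x) + (\<Sum>x\<in>?Q. \<phi> x)"
      by (rule sum.subset_diff) simp
    moreover have "vanishes_below (Suc N) (\<Sum>x\<in>?M - ?Q. \<phi> x)"
    proof (rule vanishes_below_sum)
      fix x assume "x \<in> ?M - ?Q"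
      moreover have "vanishes_below (mono_degree (fst x) + mono_degree (snd x)) (\<phi> x)"
        unfolding \<phi>_def by (intro vanishes_below_mult vanishes_below_scalar_mult vanishes_below_eval_mono h)
      ultimately show "vanishes_below (Suc N) (\<phi> x)"
        by (auto elim: vanishes_below_mono)
    qed
    ultimately show ?thesis
      by (simp add: agree_upto_def)
  qed
  also have "(\<Sum>x\<in>?M. \<phi> x) = subst_upto N h f * subst_upto N h g"
    by (simp add: subst_upto_def sum_product sum.cartesian_product \<phi>_def case_prod_beta)
  finally show ?thesis .
qed

lemma subst_mult:
  assumes h: "admissible h" shows "subst h (f * g) = subst h f * subst h g"
proof (rule subst_eqI[OF h])
  fix N
  have "agree_upto N (subst_upto N h (f * g)) (subst_upto N h f * subst_upto N h g)"
    by (rule subst_upto_mult[OF h])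
  also have "agree_upto N \<dots> (subst h f * subst h g)"
    by (intro agree_upto_mult subst_agree_upto[THEN agree_upto_sym] h)
  finally show "agree_upto N (subst_upto N h (f * g)) (subst h f * subst h g)" .
qed

section \<open>Suspension\<close>

lift_definition sign_twist :: "sfps \<Rightarrow> sfps" is "\<lambda>f m. (-1) ^ mono_count m * f m" .

lemma coeff_sign_twist: "coeff (sign_twist f) m = (-1) ^ mono_count m * coeff f m"
  by transfer simp

lemma sign_twist_add [simp]: "sign_twist (f + g) = sign_twist f + sign_twist g"
  by (rule sfps_eqI) (simp add: coeff_sign_twist algebra_simps)

lemma sign_twist_diff [simp]: "sign_twist (f - g) = sign_twist f - sign_twist g"
  by (rule sfps_eqI) (simp add: coeff_sign_twist algebra_simps)

lemma sign_twist_mult [simp]: "sign_twist (f * g) = sign_twist f * sign_twist g"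
proof (rule sfps_eqI)
  fix m
  show "coeff (sign_twist (f * g)) m = coeff (sign_twist f * sign_twist g) m"
    unfolding coeff_sign_twist coeff_mult sum_distrib_left
    by (rule sum.cong) (auto simp: mono_splits_def mono_count_add power_add)
qed

lemma sign_twist_scalar [simp]: "sign_twist (scalar c) = scalar c"
  by (rule sfps_eqI) (simp add: coeff_sign_twist coeff_scalar)

lemma sign_twist_one [simp]: "sign_twist 1 = 1"
  using sign_twist_scalar[of 1] by simp

lemma sign_twist_zero [simp]: "sign_twist 0 = 0"
  using sign_twist_scalar[of 0] by simp

lemma sign_twist_power [simp]: "sign_twist (f ^ n) = sign_twist f ^ n"
  by (induction n) auto

lemma sign_twist_prod: "sign_twist (prod F S) = (\<Prod>i\<in>S. sign_twist (F i))"
  by (induction S rule: infinite_finite_induct) auto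

lemma sign_twist_p1: "sign_twist p1 = - p1"
  by (rule sfps_eqI) (simp add: coeff_sign_twist coeff_p1)

lemma sign_twist_family_sum: "sign_twist (family_sum F) = family_sum (\<lambda>i. sign_twist (F i))"
  by (rule sfps_eqI) (simp add: coeff_sign_twist family_sum_def sf_sum_family_def sum_distrib_left)

lemma sign_twist_eval_mono: "sign_twist (eval_mono h \<mu>) = eval_mono (\<lambda>i. sign_twist (h i)) \<mu>"
  by (simp add: eval_mono_def sign_twist_prod)

lemma sign_twist_subst: "sign_twist (subst h g) = subst (\<lambda>i. sign_twist (h i)) g"
  by (simp add: subst_def sign_twist_family_sum sign_twist_eval_mono)

lemma scalar_neg_one_power: "scalar ((-1) ^ n) = (-1) ^ n"
  by (simp add: scalar_power scalar_uminus)

lemma subst_negated: "subst (\<lambda>i. - h i) g = subst h (sign_twist g)"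
  unfolding subst_def eval_mono_uminus coeff_sign_twist
  by (simp add: scalar_mult scalar_neg_one_power mult_ac)

lemma pdiff_sign_twist: "pdiff j (sign_twist f) = - sign_twist (pdiff j f)"
  by (rule sfps_eqI) (simp add: coeff_pdiff coeff_sign_twist mono_count_add)

lemma coeff_sign_twist_0: "coeff (sign_twist f) 0 = coeff f 0"
  by (simp add: coeff_sign_twist)

definition susp :: "sfps \<Rightarrow> sfps" where
  "susp f = - sign_twist f"

lemma sf_susp_coeff: "sf_susp (coeff f) = coeff (susp f)"
  by (simp add: fun_eq_iff sf_susp_def susp_def coeff_sign_twist)

section \<open>The chain rule for \<open>\<partial>/\<partial>p\<^sub>1\<close>\<close>

lemma pdiff_eval_mono:
  assumes h: "\<And>k. k \<noteq> 0 \<Longrightarrow> pdiff 0 (h k) = 0"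
  shows "pdiff 0 (eval_mono h \<mu>)
    = of_nat (Poly_Mapping.lookup \<mu> 0) * eval_mono h (\<mu> - unit_mono 0) * pdiff 0 (h 0)"
proof -
  define R where "R = (\<Prod>i\<in>Poly_Mapping.keys \<mu> - {0}. h i ^ Poly_Mapping.lookup \<mu> i)"
  have DR: "pdiff 0 R = 0"
    unfolding R_def by (rule pdiff_prod_zero) (auto intro: pdiff_power_zero h)
  show ?thesis
  proof (cases "Poly_Mapping.lookup \<mu> 0")
    case 0
    then show ?thesis
      by (simp add: eval_mono_split_0[of h \<mu>] pdiff_mult DR flip: R_def)
  next
    case (Suc n)
    have "pdiff 0 (eval_mono h \<mu>) = pdiff 0 (h 0 ^ Suc n) * R"
      by (simp add: eval_mono_split_0[of h \<mu>] Suc pdiff_mult DR flip: R_def)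
    also have "\<dots> = of_nat (Suc n) * h 0 ^ n * pdiff 0 (h 0) * R"
      by (simp only: pdiff_power)
    also have "\<dots> = of_nat (Poly_Mapping.lookup \<mu> 0) * eval_mono h (\<mu> - unit_mono 0) * pdiff 0 (h 0)"
      unfolding eval_mono_minus_unit_mono_0 R_def[symmetric] Suc by (simp add: mult_ac)
    finally show ?thesis .
  qed
qed

lemma sum_monos_upto_shift:
  "(\<Sum>\<mu>\<in>monos_upto (Suc N). of_nat (Poly_Mapping.lookup \<mu> 0) * \<psi> \<mu>)
   = (\<Sum>\<nu>\<in>monos_upto N. of_nat (Poly_Mapping.lookup \<nu> 0 + 1) * \<psi> (\<nu> + unit_mono 0))"
  (is "?L = ?R")
proof -
  let ?T = "{\<mu> \<in> monos_upto (Suc N). Poly_Mapping.lookup \<mu> 0 \<noteq> 0}"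
  have "?L = (\<Sum>\<mu>\<in>?T. of_nat (Poly_Mapping.lookup \<mu> 0) * \<psi> \<mu>)"
    by (rule sum.mono_neutral_right) auto
  also have "\<dots> = ?R"
  proof (rule sum.reindex_bij_witness[of _ "\<lambda>\<nu>. \<nu> + unit_mono 0" "\<lambda>\<mu>. \<mu> - unit_mono 0"])
    fix \<mu> assume "\<mu> \<in> ?T"
    then have mu: "mono_degree \<mu> \<le> Suc N" "Poly_Mapping.lookup \<mu> 0 \<noteq> 0" by (auto simp: monos_upto_def)
    have eq: "\<mu> - unit_mono 0 + unit_mono 0 = \<mu>"
      using mu(2) by (rule minus_plus_unit_mono)
    show "\<mu> - unit_mono 0 + unit_mono 0 = \<mu>" by (rule eq)
    have "mono_degree \<mu> = mono_degree (\<mu> - unit_mono 0) + 1" using mono_degree_add[of "\<mu> - unit_mono 0" "unit_mono 0"] eq by simp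
    then show "\<mu> - unit_mono 0 \<in> monos_upto N" using mu by (simp add: monos_upto_def)
    have lk: "Poly_Mapping.lookup (\<mu> - unit_mono 0) 0 + 1 = Poly_Mapping.lookup \<mu> 0"
      using mu(2) by (simp add: lookup_minus)
    show "of_nat (Poly_Mapping.lookup (\<mu> - unit_mono 0) 0 + 1) * \<psi> (\<mu> - unit_mono 0 + unit_mono 0) =
          of_nat (Poly_Mapping.lookup \<mu> 0) * \<psi> \<mu>"
      using eq lk by simp
  next
    fix \<nu> assume "\<nu> \<in> monos_upto N"
    then show "\<nu> + unit_mono 0 - unit_mono 0 = \<nu>" "\<nu> + unit_mono 0 \<in> ?T"
      by (auto simp: monos_upto_def mono_degree_add lookup_add)
  qed
  finally show ?thesis .
qed

lemma pdiff_subst: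
  assumes admissible: "admissible h" and h: "\<And>k. k \<noteq> 0 \<Longrightarrow> pdiff 0 (h k) = 0"
  shows "pdiff 0 (subst h g) = subst h (pdiff 0 g) * pdiff 0 (h 0)"
proof (rule sfps_eqI_agree_upto)
  fix N
  have "agree_upto (N + Suc 0) (subst h g) (subst_upto (Suc N) h g)"
    using subst_agree_upto[OF admissible, of "Suc N" g] by simp
  then have "agree_upto N (pdiff 0 (subst h g)) (pdiff 0 (subst_upto (Suc N) h g))"
    by (rule pdiff_agree_upto)
  also have "pdiff 0 (subst_upto (Suc N) h g)
      = (\<Sum>\<mu>\<in>monos_upto (Suc N). of_nat (Poly_Mapping.lookup \<mu> 0) *
           (scalar (coeff g \<mu>) * eval_mono h (\<mu> - unit_mono 0))) * pdiff 0 (h 0)"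
    unfolding subst_upto_def pdiff_sum pdiff_scalar_mult sum_distrib_right
    by (rule sum.cong) (simp_all add: pdiff_eval_mono[OF h] mult_ac)
  also have "\<dots> = (\<Sum>\<nu>\<in>monos_upto N. of_nat (Poly_Mapping.lookup \<nu> 0 + 1) *
           (scalar (coeff g (\<nu> + unit_mono 0)) * eval_mono h \<nu>)) * pdiff 0 (h 0)"
    by (subst sum_monos_upto_shift) simp
  also have "\<dots> = subst_upto N h (pdiff 0 g) * pdiff 0 (h 0)"
    by (simp add: subst_upto_def coeff_pdiff scalar_mult scalar_add scalar_of_nat mult_ac)
  also have "agree_upto N \<dots> (subst h (pdiff 0 g) * pdiff 0 (h 0))"
    by (intro agree_upto_mult subst_agree_upto[THEN agree_upto_sym] admissible agree_upto_refl)
  finally show "agree_upto N (pdiff 0 (subst h g)) (subst h (pdiff 0 g) * pdiff 0 (h 0))" .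
qed

section \<open>Plethysm\<close>

text \<open>\<open>dilates k m a\<close>: the monomial \<open>m\<close> is \<open>a\<close> with every \<open>p\<^sub>j\<close> replaced by \<open>p\<^sub>j\<^sub>k\<close>.\<close>

definition dilates :: "nat \<Rightarrow> mono \<Rightarrow> mono \<Rightarrow> bool" where
  "dilates k m a \<longleftrightarrow> (\<forall>i. Poly_Mapping.lookup m i =
      (if k dvd Suc i then Poly_Mapping.lookup a (Suc i div k - 1) else 0))"

lift_definition pleth_p :: "nat \<Rightarrow> sfps \<Rightarrow> sfps" is sf_pk_pleth .

lemma coeff_pleth_p: "coeff (pleth_p k f) m = sum (coeff f) {a. dilates k m a}"
  by transfer (simp add: sf_pk_pleth_def dilates_def)

lemma dilates_lookup:
  assumes "dilates k m a" "k \<ge> 1"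
  shows "Poly_Mapping.lookup m (k * Suc j - 1) = Poly_Mapping.lookup a j"
proof -
  have s: "Suc (k * Suc j - 1) = k * Suc j" using assms(2) by (cases k) auto
  have "Poly_Mapping.lookup m (k * Suc j - 1) = (if k dvd Suc (k * Suc j - 1)
      then Poly_Mapping.lookup a (Suc (k * Suc j - 1) div k - 1) else 0)"
    using assms(1) unfolding dilates_def by blast
  then show ?thesis using s assms(2) by simp
qed

lemma dilates_keys:
  assumes "dilates k m a" "k \<ge> 1"
  shows "Poly_Mapping.keys m = (\<lambda>j. k * Suc j - 1) ` Poly_Mapping.keys a"
proof (rule set_eqI)
  fix i
  show "i \<in> Poly_Mapping.keys m \<longleftrightarrow> i \<in> (\<lambda>j. k * Suc j - 1) ` Poly_Mapping.keys a"
  proof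
    assume i: "i \<in> Poly_Mapping.keys m"
    then have "Poly_Mapping.lookup m i \<noteq> 0" by (simp add: in_keys_iff)
    moreover have "Poly_Mapping.lookup m i = (if k dvd Suc i then Poly_Mapping.lookup a (Suc i div k - 1) else 0)"
      using assms(1) unfolding dilates_def by blast
    ultimately have dv: "k dvd Suc i" and nz: "Poly_Mapping.lookup a (Suc i div k - 1) \<noteq> 0"
      by (auto split: if_splits)
    obtain q where q: "Suc i = k * q" using dv by blast
    with assms(2) have qpos: "q \<ge> 1" by (cases q) auto
    have "Suc i div k = q" using q assms(2) by simp
    then have "i = k * Suc (Suc i div k - 1) - 1" using q qpos by simp
    then show "i \<in> (\<lambda>j. k * Suc j - 1) ` Poly_Mapping.keys a"
      using nz by (auto simp: in_keys_iff)
  next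
    assume "i \<in> (\<lambda>j. k * Suc j - 1) ` Poly_Mapping.keys a"
    then obtain j where "j \<in> Poly_Mapping.keys a" "i = k * Suc j - 1" by blast
    then show "i \<in> Poly_Mapping.keys m"
      using dilates_lookup[OF assms] by (simp add: in_keys_iff)
  qed
qed

lemma inj_dilated_index: "k \<ge> 1 \<Longrightarrow> inj (\<lambda>j::nat. k * Suc j - 1)"
proof (rule injI)
  fix x y assume k: "k \<ge> 1" and eq: "k * Suc x - 1 = k * Suc y - 1"
  have "k * Suc x \<ge> 1" "k * Suc y \<ge> 1" using k by simp_all
  with eq have "k * Suc x = k * Suc y" by linarith
  then show "x = y" using k by simp
qed

lemma dilates_mono_degree:
  assumes "dilates k m a" "k \<ge> 1"
  shows "mono_degree m = k * mono_degree a"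
proof -
  have "mono_degree m = (\<Sum>i\<in>(\<lambda>j. k * Suc j - 1) ` Poly_Mapping.keys a. Suc i * Poly_Mapping.lookup m i)"
    unfolding mono_degree_def dilates_keys[OF assms] ..
  also have "\<dots> = (\<Sum>j\<in>Poly_Mapping.keys a. Suc (k * Suc j - 1) * Poly_Mapping.lookup m (k * Suc j - 1))"
    by (rule sum.reindex[unfolded comp_def]) (rule inj_on_subset[OF inj_dilated_index[OF assms(2)]], simp)
  also have "\<dots> = (\<Sum>j\<in>Poly_Mapping.keys a. k * (Suc j * Poly_Mapping.lookup a j))"
  proof (intro sum.cong refl)
    fix j
    have "Suc (k * Suc j - 1) = k * Suc j" using assms(2) by (cases k) auto
    then show "Suc (k * Suc j - 1) * Poly_Mapping.lookup m (k * Suc j - 1) = k * (Suc j * Poly_Mapping.lookup a j)"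
      using dilates_lookup[OF assms, of j] by (metis mult.assoc)
  qed
  also have "\<dots> = k * mono_degree a"
    by (simp add: mono_degree_def sum_distrib_left)
  finally show ?thesis .
qed

lemma dilates_count:
  assumes "dilates k m a" "k \<ge> 1"
  shows "mono_count m = mono_count a"
proof -
  have "mono_count m = (\<Sum>i\<in>(\<lambda>j. k * Suc j - 1) ` Poly_Mapping.keys a. Poly_Mapping.lookup m i)"
    unfolding mono_count_def dilates_keys[OF assms] ..
  also have "\<dots> = (\<Sum>j\<in>Poly_Mapping.keys a. Poly_Mapping.lookup m (k * Suc j - 1))"
    by (rule sum.reindex[unfolded comp_def]) (rule inj_on_subset[OF inj_dilated_index[OF assms(2)]], simp)
  also have "\<dots> = (\<Sum>j\<in>Poly_Mapping.keys a. Poly_Mapping.lookup a j)"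
    by (intro sum.cong refl) (rule dilates_lookup[OF assms])
  also have "\<dots> = mono_count a"
    by (simp add: mono_count_def)
  finally show ?thesis .
qed

lemma dilates_one: "dilates 1 m a \<longleftrightarrow> a = m"
proof
  assume "dilates 1 m a" then show "a = m"
    by (intro poly_mapping_eqI) (simp add: dilates_def)
qed (simp add: dilates_def)

lemma pleth_p_one: "pleth_p 1 f = f"
  by (rule sfps_eqI) (simp add: coeff_pleth_p dilates_one[unfolded One_nat_def])

lemma pleth_p_uminus: "pleth_p k (- f) = - pleth_p k f"
  by (rule sfps_eqI) (simp add: coeff_pleth_p sum_negf)

lemma vanishes_below_pleth_p:
  assumes "coeff f 0 = 0"
  shows "vanishes_below (Suc k) (pleth_p (Suc k) f)"
  unfolding vanishes_below_def
proof (intro allI impI)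
  fix m assume "coeff (pleth_p (Suc k) f) m \<noteq> 0"
  then obtain a where "a \<in> {a. dilates (Suc k) m a}" "coeff f a \<noteq> 0"
    unfolding coeff_pleth_p by (rule sum.not_neutral_contains_not_neutral)
  then have a: "dilates (Suc k) m a" "coeff f a \<noteq> 0" by auto
  then have "a \<noteq> 0" using assms by auto
  then have "mono_degree a \<noteq> 0" by simp
  then have "mono_degree a \<ge> 1" by linarith
  then show "Suc k \<le> mono_degree m" using dilates_mono_degree[OF a(1)] mult_le_mono2[of 1 "mono_degree a" "Suc k"] by simp
qed

lemma pleth_p_agree_upto:
  assumes "agree_upto N f g" "k \<ge> 1"
  shows "agree_upto N (pleth_p k f) (pleth_p k g)"
  unfolding agree_upto_iff coeff_pleth_p
proof (intro allI impI sum.cong refl)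
  fix m a assume m: "mono_degree m \<le> N" and "a \<in> {a. dilates k m a}"
  then have "mono_degree m = k * mono_degree a" using dilates_mono_degree assms(2) by auto
  moreover have "1 * mono_degree a \<le> k * mono_degree a" by (rule mult_le_mono1) (use assms(2) in simp)
  ultimately have "mono_degree a \<le> N" using m by linarith
  then show "coeff f a = coeff g a" using assms(1) by (simp add: agree_upto_iff)
qed

lemma pdiff_pleth_p:
  assumes "k \<ge> 2"
  shows "pdiff 0 (pleth_p k f) = 0"
proof (rule sfps_eqI)
  fix m
  have "{a. dilates k (m + unit_mono 0) a} = {}"
  proof (rule ccontr)
    assume "{a. dilates k (m + unit_mono 0) a} \<noteq> {}"
    then obtain a where "dilates k (m + unit_mono 0) a" by blast
    then have "Poly_Mapping.lookup (m + unit_mono 0) 0 = (if k dvd Suc 0 then Poly_Mapping.lookup a (Suc 0 div k - 1) else 0)"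
      unfolding dilates_def by blast
    moreover have "\<not> k dvd Suc 0" using assms by auto
    ultimately have "Poly_Mapping.lookup (m + unit_mono 0) 0 = 0" by simp
    then show False by (simp add: lookup_add)
  qed
  then show "coeff (pdiff 0 (pleth_p k f)) m = coeff 0 m"
    by (simp add: coeff_pdiff coeff_pleth_p)
qed

lemma sign_twist_pleth_p:
  assumes "k \<ge> 1"
  shows "sign_twist (pleth_p k f) = pleth_p k (sign_twist f)"
proof (rule sfps_eqI)
  fix m
  show "coeff (sign_twist (pleth_p k f)) m = coeff (pleth_p k (sign_twist f)) m"
    unfolding coeff_sign_twist coeff_pleth_p sum_distrib_left
  proof (intro sum.cong refl)
    fix a assume "a \<in> {a. dilates k m a}"
    then have "mono_count m = mono_count a" using dilates_count[OF _ assms] by blast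
    then show "(-1) ^ mono_count m * coeff f a = (-1) ^ mono_count a * coeff f a" by simp
  qed
qed

definition pleth_family :: "sfps \<Rightarrow> nat \<Rightarrow> sfps" where
  "pleth_family f = (\<lambda>k. pleth_p (Suc k) f)"

lemma admissible_pleth_family: "coeff f 0 = 0 \<Longrightarrow> admissible (pleth_family f)"
  by (simp add: admissible_def pleth_family_def vanishes_below_pleth_p)

lemma pleth_family_0: "pleth_family f 0 = f"
  by (simp add: pleth_family_def pleth_p_one[unfolded One_nat_def])

lemma pdiff_pleth_family: "k \<noteq> 0 \<Longrightarrow> pdiff 0 (pleth_family f k) = 0"
  by (simp add: pleth_family_def pdiff_pleth_p)

lemma sign_twist_pleth_family: "(\<lambda>i. sign_twist (pleth_family f i)) = pleth_family (sign_twist f)"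
  by (simp add: pleth_family_def sign_twist_pleth_p)

lemma pleth_family_uminus: "pleth_family (- f) = (\<lambda>i. - pleth_family f i)"
  by (simp add: pleth_family_def pleth_p_uminus)

lemma eval_mono_pleth_family_agree_upto:
  assumes "agree_upto N f g"
  shows "agree_upto N (eval_mono (pleth_family f) \<mu>) (eval_mono (pleth_family g) \<mu>)"
  unfolding eval_mono_def pleth_family_def
  by (intro agree_upto_prod agree_upto_power pleth_p_agree_upto assms) simp

definition pleth :: "sfps \<Rightarrow> sfps \<Rightarrow> sfps" where
  "pleth g f = subst (pleth_family f) g"

lemma foldr_sf_mult_coeff:
  "foldr (\<lambda>i acc. sf_mult (sf_pow (Poly_Mapping.lookup \<mu> i) (coeff (H i))) acc) xs sf_one
   = coeff (prod_list (map (\<lambda>i. H i ^ Poly_Mapping.lookup \<mu> i) xs))"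
  by (induction xs) (simp_all add: one_sfps.rep_eq times_sfps.rep_eq coeff_power)

lemma sf_subst_mono_coeff:
  "sf_subst_mono (\<lambda>i. sf_pk_pleth (Suc i) (coeff f)) \<mu> = coeff (eval_mono (pleth_family f) \<mu>)"
proof -
  have "sf_subst_mono (\<lambda>i. sf_pk_pleth (Suc i) (coeff f)) \<mu>
      = coeff (prod_list (map (\<lambda>i. pleth_family f i ^ Poly_Mapping.lookup \<mu> i)
          (sorted_list_of_set (Poly_Mapping.keys \<mu>))))"
    unfolding sf_subst_mono_def pleth_family_def pleth_p.rep_eq[symmetric] by (rule foldr_sf_mult_coeff)
  also have "\<dots> = coeff (eval_mono (pleth_family f) \<mu>)"
    unfolding eval_mono_def by (subst prod.distinct_set_conv_list[symmetric]) auto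
  finally show ?thesis .
qed

lemma sf_pleth_coeff: "sf_pleth (coeff g) (coeff f) = coeff (pleth g f)"
  unfolding sf_pleth_def pleth_def subst_def family_sum_def
  by (simp add: sf_subst_mono_coeff coeff_scalar_mult_eq_sf_smul)

context
  fixes f :: sfps
  assumes f0: "coeff f 0 = 0"
begin

lemma pleth_diff: "pleth (g - g') f = pleth g f - pleth g' f"
  unfolding pleth_def by (rule subst_diff[OF admissible_pleth_family[OF f0]])

lemma pleth_one: "pleth 1 f = 1"
  unfolding pleth_def by (rule subst_one[OF admissible_pleth_family[OF f0]])

lemma pleth_mult: "pleth (g * g') f = pleth g f * pleth g' f"
  unfolding pleth_def by (rule subst_mult[OF admissible_pleth_family[OF f0]])

lemma pdiff_pleth: "pdiff 0 (pleth g f) = pleth (pdiff 0 g) f * pdiff 0 f"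
  using pdiff_subst[OF admissible_pleth_family[OF f0] pdiff_pleth_family]
  by (simp add: pleth_def pleth_family_0)

lemma pleth_uminus: "pleth g (- f) = pleth (sign_twist g) f"
  unfolding pleth_def pleth_family_uminus by (rule subst_negated)

end

lemma sign_twist_pleth: "sign_twist (pleth g f) = pleth g (sign_twist f)"
  unfolding pleth_def sign_twist_subst sign_twist_pleth_family ..

lemma pleth_agree_upto:
  assumes "coeff f 0 = 0" "coeff f' 0 = 0" "agree_upto N f f'"
  shows "agree_upto N (pleth g f) (pleth g f')"
proof -
  have "agree_upto N (pleth g f) (subst_upto N (pleth_family f) g)"
    unfolding pleth_def by (rule subst_agree_upto[OF admissible_pleth_family[OF assms(1)]])
  also have "agree_upto N \<dots> (subst_upto N (pleth_family f') g)"
    unfolding subst_upto_def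
    by (intro agree_upto_sum agree_upto_mult agree_upto_refl eval_mono_pleth_family_agree_upto assms(3))
  also have "agree_upto N \<dots> (pleth g f')"
    unfolding pleth_def by (rule subst_agree_upto[OF admissible_pleth_family[OF assms(2)], THEN agree_upto_sym])
  finally show ?thesis .
qed

section \<open>The series \<open>exp (\<Sum>\<^sub>k p\<^sub>k / k)\<close>\<close>

definition Lsum :: sfps where
  "Lsum = Abs_sfps (sf_sum_family (\<lambda>k. sf_smul (1 / of_nat (Suc k)) (sf_p (Suc k))))"

definition Hsum :: sfps where
  "Hsum = Abs_sfps (sf_exp (coeff Lsum))"

lemma Comm_eq_Hsum_minus_1: "Abs_sfps Comm = Hsum - 1"
  by (rule sfps_eqI) (simp add: Comm_def Hsum_def Lsum_def sf_diff_def one_sfps.rep_eq)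

lemma coeff_Lsum: "coeff Lsum m = (\<Sum>k\<in>{k. m = unit_mono k}. 1 / of_nat (Suc k))"
proof -
  have "coeff Lsum m = (\<Sum>i | 1 / of_nat (Suc i) * (if m = unit_mono i then 1 else 0) \<noteq> (0::rat).
      1 / of_nat (Suc i) * (if m = unit_mono i then 1 else 0))"
    by (simp add: Lsum_def sf_sum_family_def sf_smul_def sf_p_def)
  also have "\<dots> = (\<Sum>k\<in>{k. m = unit_mono k}. 1 / of_nat (Suc k))"
    by (rule sum.cong) auto
  finally show ?thesis .
qed

lemma coeff_Lsum_0: "coeff Lsum 0 = 0"
  by (simp add: coeff_Lsum)

lemma vanishes_below_Lsum: "vanishes_below 1 Lsum"
  unfolding vanishes_below_def
proof (intro allI impI)
  fix m assume "coeff Lsum m \<noteq> 0"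
  then have "m \<noteq> 0" using coeff_Lsum_0 by auto
  then have "mono_degree m \<noteq> 0" by simp
  then show "1 \<le> mono_degree m" by linarith
qed

lemma pdiff_Lsum: "pdiff j Lsum = scalar (1 / of_nat (Suc j))"
proof (rule sfps_eqI)
  fix m
  show "coeff (pdiff j Lsum) m = coeff (scalar (1 / of_nat (Suc j))) m"
  proof (cases "m = 0")
    case True
    have "{k. unit_mono j = unit_mono k} = {j}" by auto
    then show ?thesis using True by (simp add: coeff_pdiff coeff_Lsum coeff_scalar)
  next
    case False
    have "{k. m + unit_mono j = unit_mono k} = {}"
    proof (rule ccontr)
      assume "{k. m + unit_mono j = unit_mono k} \<noteq> {}"
      then obtain k where "m + unit_mono j = unit_mono k" by blast
      then have "mono_count m + 1 = 1" using mono_count_add[of m "unit_mono j"] by simp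
      then show False using False by simp
    qed
    then show ?thesis using False by (simp add: coeff_pdiff coeff_Lsum coeff_scalar)
  qed
qed

definition exp_term :: "nat \<Rightarrow> sfps" where
  "exp_term n = scalar (1 / fact n) * Lsum ^ n"

lemma Hsum_family_sum: "Hsum = family_sum exp_term"
  unfolding Hsum_def family_sum_def sf_exp_def exp_term_def
  by (simp add: coeff_scalar_mult_eq_sf_smul coeff_power)

lemma Hsum_agree_upto: "N \<le> K \<Longrightarrow> agree_upto N Hsum (\<Sum>n\<le>K. exp_term n)"
proof -
  assume "N \<le> K"
  have "agree_upto K Hsum (sum exp_term {n. id n \<le> K})"
    unfolding Hsum_family_sum
  proof (rule family_sum_agree_upto)
    show "finite {n. id n \<le> K}" by simp
    fix n show "vanishes_below (id n) (exp_term n)"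
      unfolding exp_term_def using vanishes_below_power[OF vanishes_below_Lsum, of n] by (simp add: vanishes_below_scalar_mult)
  qed
  moreover have "{n. id n \<le> K} = {..K}" by auto
  ultimately show ?thesis using \<open>N \<le> K\<close> agree_upto_mono by metis
qed

lemma inverse_fact_Suc_mult: "(1 / fact (Suc n) :: 'a::field_char_0) * of_nat (Suc n) = 1 / fact n"
proof -
  have a: "(fact n::'a) \<noteq> 0" by simp
  have b: "(of_nat (Suc n)::'a) \<noteq> 0" by (simp only: of_nat_eq_0_iff)
  have "(1 / fact (Suc n) :: 'a) * of_nat (Suc n) = 1 / (of_nat (Suc n) * fact n) * of_nat (Suc n)"
    by (simp only: fact_Suc)
  also have "\<dots> = 1 / fact n" using a b by (simp only: divide_simps) simp
  finally show ?thesis .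
qed

lemma pdiff_exp_term_Suc: "pdiff j (exp_term (Suc n)) = exp_term n * pdiff j Lsum"
proof -
  have "pdiff j (exp_term (Suc n)) = scalar (1 / fact (Suc n)) * (of_nat (Suc n) * Lsum ^ n * pdiff j Lsum)"
    unfolding exp_term_def pdiff_scalar_mult by (simp only: pdiff_power)
  also have "\<dots> = scalar (1 / fact (Suc n) * of_nat (Suc n)) * Lsum ^ n * pdiff j Lsum"
    by (simp only: scalar_mult scalar_of_nat mult_ac)
  also have "\<dots> = exp_term n * pdiff j Lsum"
    by (simp only: inverse_fact_Suc_mult exp_term_def)
  finally show ?thesis .
qed

lemma pdiff_Hsum: "pdiff j Hsum = scalar (1 / of_nat (Suc j)) * Hsum"
proof (rule sfps_eqI_agree_upto)
  fix N
  let ?c = "scalar (1 / of_nat (Suc j))"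
  have "agree_upto (N + Suc j) Hsum (\<Sum>n\<le>Suc (N + j). exp_term n)"
    by (rule Hsum_agree_upto) simp
  then have "agree_upto N (pdiff j Hsum) (pdiff j (\<Sum>n\<le>Suc (N + j). exp_term n))"
    by (rule pdiff_agree_upto)
  also have "pdiff j (\<Sum>n\<le>Suc (N + j). exp_term n) = pdiff j (exp_term 0 + (\<Sum>n\<le>N + j. exp_term (Suc n)))"
    by (simp only: sum.atMost_Suc_shift)
  also have "\<dots> = pdiff j (exp_term 0) + (\<Sum>n\<le>N + j. pdiff j (exp_term (Suc n)))"
    by (simp only: pdiff_add pdiff_sum)
  also have "\<dots> = (\<Sum>n\<le>N + j. exp_term n) * ?c"
    by (simp only: pdiff_exp_term_Suc pdiff_Lsum) (simp add: exp_term_def sum_distrib_right)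
  also have "agree_upto N \<dots> (Hsum * ?c)"
    by (intro agree_upto_mult agree_upto_refl agree_upto_sym[OF Hsum_agree_upto]) simp
  finally show "agree_upto N (pdiff j Hsum) (?c * Hsum)" by (simp add: mult.commute)
qed

lemma coeff_Hsum_0: "coeff Hsum 0 = 1"
proof -
  have "agree_upto 0 Hsum (\<Sum>n\<le>0. exp_term n)" by (rule Hsum_agree_upto) simp
  then show ?thesis by (simp add: agree_upto_iff exp_term_def coeff_one)
qed

lemma sign_twist_Hsum_mult_Hsum: "sign_twist Hsum * Hsum = 1"
proof -
  have "pdiff j (sign_twist Hsum * Hsum) = 0" for j
    by (simp add: pdiff_mult pdiff_sign_twist pdiff_Hsum algebra_simps)
  then have "sign_twist Hsum * Hsum = scalar (coeff (sign_twist Hsum * Hsum) 0)" by (rule pdiff_all_zero_imp_scalar)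
  also have "coeff (sign_twist Hsum * Hsum) 0 = 1"
    by (simp add: coeff_mult_0 coeff_sign_twist_0 coeff_Hsum_0)
  finally show ?thesis by simp
qed

section \<open>\<open>PreLie\<close> as a fixed point\<close>

definition prelie_step :: "sfps \<Rightarrow> sfps" where
  "prelie_step f = p1 * (1 + pleth (Abs_sfps Comm) f)"

lemma coeff_prelie_step_0: "coeff (prelie_step f) 0 = 0"
  using vanishes_below_mult_left[OF vanishes_below_p1, of "1 + pleth (Abs_sfps Comm) f"]
  by (simp add: prelie_step_def vanishes_belowD)

text \<open>The factor \<open>p\<^sub>1\<close> makes \<open>prelie_step\<close> a contraction for the degreewise comparison.\<close>

lemma prelie_step_agree_upto:
  assumes "coeff f 0 = 0" "coeff g 0 = 0" "agree_upto N f g"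
  shows "agree_upto (Suc N) (prelie_step f) (prelie_step g)"
proof -
  have "vanishes_below (Suc N) (pleth (Abs_sfps Comm) f - pleth (Abs_sfps Comm) g)"
    using pleth_agree_upto[OF assms] by (simp add: agree_upto_def)
  then have "vanishes_below (1 + Suc N) (p1 * (pleth (Abs_sfps Comm) f - pleth (Abs_sfps Comm) g))"
    by (rule vanishes_below_mult[OF vanishes_below_p1])
  moreover have "p1 * (pleth (Abs_sfps Comm) f - pleth (Abs_sfps Comm) g) = prelie_step f - prelie_step g"
    by (simp add: prelie_step_def algebra_simps)
  ultimately show ?thesis by (simp add: agree_upto_def)
qed

primrec prelie_iter :: "nat \<Rightarrow> sfps" where
  "prelie_iter 0 = 0"
| "prelie_iter (Suc n) = prelie_step (prelie_iter n)"

lemma coeff_prelie_iter_0: "coeff (prelie_iter n) 0 = 0"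
  by (cases n) (simp_all add: coeff_prelie_step_0)

lemma prelie_iter_agree_upto_Suc: "agree_upto n (prelie_iter n) (prelie_iter (Suc n))"
proof (induction n)
  case 0
  show ?case by (simp add: agree_upto_0_iff coeff_prelie_step_0)
next
  case (Suc n)
  show ?case using prelie_step_agree_upto[OF coeff_prelie_iter_0 coeff_prelie_iter_0 Suc] by simp
qed

lemma prelie_iter_agree_upto: "n \<le> n' \<Longrightarrow> agree_upto n (prelie_iter n) (prelie_iter n')"
proof (induction n' rule: dec_induct)
  case (step k)
  then show ?case
    using agree_upto_trans agree_upto_mono prelie_iter_agree_upto_Suc by blast
qed simp

definition prelie_limit :: sfps where
  "prelie_limit = Abs_sfps (\<lambda>m. coeff (prelie_iter (mono_degree m)) m)"

lemma prelie_limit_agree_upto: "agree_upto N prelie_limit (prelie_iter N)"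
  unfolding agree_upto_iff
proof (intro allI impI)
  fix m assume "mono_degree m \<le> N"
  then have "coeff (prelie_iter (mono_degree m)) m = coeff (prelie_iter N) m"
    using prelie_iter_agree_upto[of "mono_degree m" N] by (simp add: agree_upto_iff)
  then show "coeff prelie_limit m = coeff (prelie_iter N) m"
    by (simp add: prelie_limit_def)
qed

lemma coeff_prelie_limit_0: "coeff prelie_limit 0 = 0"
  by (simp add: prelie_limit_def)

lemma prelie_step_prelie_limit: "prelie_step prelie_limit = prelie_limit"
proof (rule sfps_eqI_agree_upto)
  fix N
  have "agree_upto (Suc N) (prelie_step prelie_limit) (prelie_step (prelie_iter N))"
    by (rule prelie_step_agree_upto[OF coeff_prelie_limit_0 coeff_prelie_iter_0 prelie_limit_agree_upto])
  also have "prelie_step (prelie_iter N) = prelie_iter (Suc N)" by simp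
  also have "agree_upto (Suc N) \<dots> prelie_limit" by (rule agree_upto_sym[OF prelie_limit_agree_upto])
  finally show "agree_upto N (prelie_step prelie_limit) prelie_limit" by (rule agree_upto_mono) simp
qed

lemma prelie_step_fixed_point_unique:
  assumes "coeff f 0 = 0" "prelie_step f = f" "coeff g 0 = 0" "prelie_step g = g"
  shows "f = g"
proof (rule sfps_eqI_agree_upto)
  fix N show "agree_upto N f g"
  proof (induction N)
    case 0 show ?case by (simp add: agree_upto_0_iff assms)
  next
    case (Suc N)
    show ?case using prelie_step_agree_upto[OF assms(1,3) Suc] assms(2,4) by simp
  qed
qed

lemma PreLie_equation_iff:
  "(f 0 = 0 \<and> f = sf_mult (sf_p 1) (sf_add sf_one (sf_pleth Comm f)))
   \<longleftrightarrow> (coeff (Abs_sfps f) 0 = 0 \<and> prelie_step (Abs_sfps f) = Abs_sfps f)"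
proof -
  have "sf_mult (sf_p 1) (sf_add sf_one (sf_pleth Comm f)) = coeff (prelie_step (Abs_sfps f))"
    using sf_pleth_coeff[of "Abs_sfps Comm" "Abs_sfps f"]
    by (simp add: prelie_step_def times_sfps.rep_eq plus_sfps.rep_eq one_sfps.rep_eq p1.rep_eq)
  then show ?thesis
    by (metis coeff_Abs coeff_inverse)
qed

lemma PreLie_fixed_point:
  "coeff (Abs_sfps PreLie) 0 = 0" "prelie_step (Abs_sfps PreLie) = Abs_sfps PreLie"
proof -
  let ?Q = "\<lambda>f. f 0 = 0 \<and> f = sf_mult (sf_p 1) (sf_add sf_one (sf_pleth Comm f))"
  have "?Q (coeff prelie_limit)"
    unfolding PreLie_equation_iff
    by (simp add: coeff_inverse coeff_prelie_limit_0 prelie_step_prelie_limit)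
  moreover have "f = coeff prelie_limit" if "?Q f" for f
  proof -
    from that have "coeff (Abs_sfps f) 0 = 0 \<and> prelie_step (Abs_sfps f) = Abs_sfps f"
      by (simp only: PreLie_equation_iff)
    then have "Abs_sfps f = prelie_limit"
      using prelie_step_fixed_point_unique coeff_prelie_limit_0 prelie_step_prelie_limit by blast
    then show ?thesis
      by (metis coeff_Abs)
  qed
  ultimately have "?Q PreLie"
    unfolding PreLie_def by (rule theI)
  then show "coeff (Abs_sfps PreLie) 0 = 0" "prelie_step (Abs_sfps PreLie) = Abs_sfps PreLie"
    unfolding PreLie_equation_iff by simp_all
qed

section \<open>The suspended equation\<close>

lemma one_plus_pleth_Comm: "coeff f 0 = 0 \<Longrightarrow> 1 + pleth (Abs_sfps Comm) f = pleth Hsum f"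
  by (simp add: Comm_eq_Hsum_minus_1 pleth_diff pleth_one)

lemma susp_mult_pleth_Hsum:
  assumes P0: "coeff P 0 = 0" and P: "prelie_step P = P"
  shows "susp P * pleth Hsum (susp P) = p1"
proof -
  let ?F = "susp P"
  have F0: "coeff ?F 0 = 0"
    using P0 by (simp add: susp_def coeff_sign_twist_0)
  have "?F = - sign_twist (prelie_step P)"
    using P by (simp add: susp_def)
  also have "\<dots> = p1 * (1 + pleth (Abs_sfps Comm) (- ?F))"
    by (simp add: prelie_step_def sign_twist_p1 sign_twist_pleth susp_def)
  also have "\<dots> = p1 * pleth Hsum (- ?F)"
    using F0 by (simp add: one_plus_pleth_Comm)
  also have "\<dots> = p1 * pleth (sign_twist Hsum) ?F"
    using F0 by (simp add: pleth_uminus)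
  finally have "?F * pleth Hsum ?F = p1 * (pleth (sign_twist Hsum) ?F * pleth Hsum ?F)"
    by (metis mult.assoc)
  also have "\<dots> = p1"
    using F0 by (simp flip: pleth_mult add: sign_twist_Hsum_mult_Hsum pleth_one)
  finally show ?thesis .
qed

lemma pdiff_pleth_Hsum: "coeff f 0 = 0 \<Longrightarrow> pdiff 0 (pleth Hsum f) = pleth Hsum f * pdiff 0 f"
  by (simp add: pdiff_pleth pdiff_Hsum)

theorem susp_fixed_point_identity:
  assumes "coeff P 0 = 0" "prelie_step P = P"
  shows "p1 * pdiff 0 (susp P) + pdiff 0 (pleth (Abs_sfps Comm) (susp P)) = 1"
proof -
  define F where "F = susp P"
  define U where "U = pleth Hsum F"
  have F0: "coeff F 0 = 0"
    using assms(1) by (simp add: F_def susp_def coeff_sign_twist_0)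
  have FU: "F * U = p1"
    unfolding F_def U_def using assms by (rule susp_mult_pleth_Hsum)
  have dU: "pdiff 0 U = U * pdiff 0 F"
    unfolding U_def using F0 by (rule pdiff_pleth_Hsum)
  have "pdiff 0 (pleth (Abs_sfps Comm) F) = pdiff 0 U"
    using arg_cong[OF one_plus_pleth_Comm[OF F0], of "pdiff 0"] by (simp add: U_def)
  then have "p1 * pdiff 0 F + pdiff 0 (pleth (Abs_sfps Comm) F) = F * U * pdiff 0 F + pdiff 0 U"
    by (simp add: FU)
  also have "\<dots> = pdiff 0 (F * U)"
    by (simp add: pdiff_mult dU algebra_simps)
  finally show ?thesis
    by (simp add: FU pdiff_p1 flip: F_def)
qed

lemma sf_dp1_coeff: "sf_dp1 (coeff f) = coeff (pdiff 0 f)"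
  by (rule ext) (simp add: sf_dp1_def coeff_pdiff)

theorem mainTheorem3:
  shows "sf_add (sf_mult (sf_p 1) (sf_dp1 (sf_susp PreLie)))
                (sf_dp1 (sf_pleth Comm (sf_susp PreLie))) = sf_one"
proof -
  let ?F = "susp (Abs_sfps PreLie)"
  have "coeff (p1 * pdiff 0 ?F + pdiff 0 (pleth (Abs_sfps Comm) ?F)) = coeff 1"
    using susp_fixed_point_identity[OF PreLie_fixed_point] by simp
  moreover have "sf_susp PreLie = coeff ?F"
    using sf_susp_coeff[of "Abs_sfps PreLie"] by simp
  ultimately show ?thesis
    by (simp add: sf_dp1_coeff sf_pleth_coeff[of "Abs_sfps Comm", simplified]
        times_sfps.rep_eq plus_sfps.rep_eq one_sfps.rep_eq p1.rep_eq)
qed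

end
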